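(* Let $\mathbb X,\mathbb Y$ be Euclidean spaces, $\varphi\colon\mathbb X\to\mathbb R$ locally Lipschitz, $\Phi\colon\mathbb X\rightrightarrows\mathbb Y$ with closed graph, $\bar y\in\operatorname{Im}\Phi$, and let $\bar x$ be a local minimizer of (P): $\min\{\varphi(x)\mid\bar y\in\Phi(x)\}$ such that, for each critical direction $u\in\mathbb S_{\mathbb X}$ for (P) at $\bar x$, $\Phi$ is asymptotically regular at $(\bar x,\bar y)$ in direction $u$. Then $\bar x$ is M-stationary, i.e., $0\in\partial\varphi(\bar x)+D^*\Phi(\bar x,\bar y)(\lambda)$ for some $\lambda\in\mathbb Y$.
   Context: $\partial$ is the limiting subdifferential; $D^*\Phi(x,y)(y^* )=\{x^*\mid(x^*,-y^* )\in\mathcal N_{\operatorname{gph}\Phi}(x,y)\}$ (limiting coderivative), $\widehat D^*$ the same with the regular normal cone. $u$ is a critical direction for (P) at $\bar x$ if there are $u_k\to u$, $\alpha_k\to0$, $v_k\to0$, $t_k\downarrow0$ with $\varphi(\bar x+t_ku_k)\le\varphi(\bar x)+t_k\|u_k\|\alpha_k$ and $\bar y+t_k\|u_k\|v_k\in\Phi(\bar x+t_ku_k)$. $\Phi$ is asymptotically regular at $(\bar x,\bar y)$ in direction $u\in\mathbb S_{\mathbb X}$ if for all sequences $(x_k,y_k)\in\operatorname{gph}\Phi$, $x_k^*$, $\lambda_k$ and $x^*$, $y^*$ with $x_k\notin\Phi^{-1}(\bar y)$, $y_k\ne\bar y$, $x_k^*\in\widehat D^*\Phi(x_k,y_k)(\lambda_k)$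 for all $k$ and $x_k\to\bar x$, $y_k\to\bar y$, $x_k^*\to x^*$, $\frac{x_k-\bar x}{\|x_k-\bar x\|}\to u$, $\frac{y_k-\bar y}{\|x_k-\bar x\|}\to0$, $\frac{\|y_k-\bar y\|}{\|x_k-\bar x\|}\lambda_k\to y^*$, $\|\lambda_k\|\to\infty$, $\frac{y_k-\bar y}{\|y_k-\bar y\|}-\frac{\lambda_k}{\|\lambda_k\|}\to0$, one has $x^*\in\operatorname{Im}D^*\Phi(\bar x,\bar y)=\bigcup_{\lambda}D^*\Phi(\bar x,\bar y)(\lambda)$. *)

theory Defs
  imports "HOL-Analysis.Analysis"
begin

definition gph :: "('a \<Rightarrow> 'b set) \<Rightarrow> ('a \<times> 'b) set" where
  "gph \<Phi> = {(x, y). y \<in> \<Phi> x}"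

definition reg_normal_cone :: "'a::euclidean_space set \<Rightarrow> 'a \<Rightarrow> 'a set" where
  "reg_normal_cone \<Omega> z = {zs. z \<in> \<Omega> \<and>
     (\<forall>e>0. \<exists>d>0. \<forall>z'\<in>\<Omega>. norm (z' - z) < d \<longrightarrow> zs \<bullet> (z' - z) \<le> e * norm (z' - z))}"

definition lim_normal_cone :: "'a::euclidean_space set \<Rightarrow> 'a \<Rightarrow> 'a set" where
  "lim_normal_cone \<Omega> z = {zs. z \<in> \<Omega> \<and>
     (\<exists>zk zsk. (\<forall>k. zk k \<in> \<Omega> \<and> zsk k \<in> reg_normal_cone \<Omega> (zk k)) \<and>
        zk \<longlonglongrightarrow> z \<and> zsk \<longlonglongrightarrow> zs)}"

definition reg_coderiv :: "('a::euclidean_space \<Rightarrow> 'b::euclidean_space set) \<Rightarrow> 'a \<Rightarrow> 'b \<Rightarrow> 'b \<Rightarrow> 'a set" where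
  "reg_coderiv \<Phi> x y ys = {xs. (xs, - ys) \<in> reg_normal_cone (gph \<Phi>) (x, y)}"

definition lim_coderiv :: "('a::euclidean_space \<Rightarrow> 'b::euclidean_space set) \<Rightarrow> 'a \<Rightarrow> 'b \<Rightarrow> 'b \<Rightarrow> 'a set" where
  "lim_coderiv \<Phi> x y ys = {xs. (xs, - ys) \<in> lim_normal_cone (gph \<Phi>) (x, y)}"

definition im_lim_coderiv :: "('a::euclidean_space \<Rightarrow> 'b::euclidean_space set) \<Rightarrow> 'a \<Rightarrow> 'b \<Rightarrow> 'a set" where
  "im_lim_coderiv \<Phi> x y = (\<Union>l. lim_coderiv \<Phi> x y l)"

definition reg_subdiff :: "('a::euclidean_space \<Rightarrow> real) \<Rightarrow> 'a \<Rightarrow> 'a set" where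
  "reg_subdiff f x = {xs. \<forall>e>0. \<exists>d>0. \<forall>x'. norm (x' - x) < d \<longrightarrow>
      f x' - f x - xs \<bullet> (x' - x) \<ge> - e * norm (x' - x)}"

definition lim_subdiff :: "('a::euclidean_space \<Rightarrow> real) \<Rightarrow> 'a \<Rightarrow> 'a set" where
  "lim_subdiff f x = {xs. \<exists>xk xsk. (\<forall>k. xsk k \<in> reg_subdiff f (xk k)) \<and>
      xk \<longlonglongrightarrow> x \<and> (\<lambda>k. f (xk k)) \<longlonglongrightarrow> f x \<and> xsk \<longlonglongrightarrow> xs}"

definition locally_lipschitz :: "('a::metric_space \<Rightarrow> real) \<Rightarrow> bool" where
  "locally_lipschitz f \<longleftrightarrow> (\<forall>x. \<exists>d>0. \<exists>L. L-lipschitz_on (ball x d) f)"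

definition local_minimizer_P :: "('a::euclidean_space \<Rightarrow> real) \<Rightarrow> ('a \<Rightarrow> 'b set) \<Rightarrow> 'b \<Rightarrow> 'a \<Rightarrow> bool" where
  "local_minimizer_P \<phi> \<Phi> yb xb \<longleftrightarrow> yb \<in> \<Phi> xb \<and>
     (\<exists>d>0. \<forall>x. yb \<in> \<Phi> x \<and> dist x xb < d \<longrightarrow> \<phi> xb \<le> \<phi> x)"

definition critical_direction :: "('a::euclidean_space \<Rightarrow> real) \<Rightarrow> ('a \<Rightarrow> 'b::euclidean_space set) \<Rightarrow> 'b \<Rightarrow> 'a \<Rightarrow> 'a \<Rightarrow> bool" where
  "critical_direction \<phi> \<Phi> yb xb u \<longleftrightarrow>
     (\<exists>uk (\<alpha>k::nat \<Rightarrow> real) vk (tk::nat \<Rightarrow> real).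
        uk \<longlonglongrightarrow> u \<and> \<alpha>k \<longlonglongrightarrow> 0 \<and> vk \<longlonglongrightarrow> 0 \<and> (\<forall>k. tk k > 0) \<and> tk \<longlonglongrightarrow> 0 \<and>
        (\<forall>k. \<phi> (xb + tk k *\<^sub>R uk k) \<le> \<phi> xb + tk k * norm (uk k) * \<alpha>k k \<and>
             yb + (tk k * norm (uk k)) *\<^sub>R vk k \<in> \<Phi> (xb + tk k *\<^sub>R uk k)))"

definition asymptotically_regular :: "('a::euclidean_space \<Rightarrow> 'b::euclidean_space set) \<Rightarrow> 'a \<Rightarrow> 'b \<Rightarrow> 'a \<Rightarrow> bool" where
  "asymptotically_regular \<Phi> xb yb u \<longleftrightarrow>
     (\<forall>xk yk xsk lk xs ys.
        (\<forall>k. yk k \<in> \<Phi> (xk k) \<and> yb \<notin> \<Phi> (xk k) \<and> yk k \<noteq> yb \<and>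
             xsk k \<in> reg_coderiv \<Phi> (xk k) (yk k) (lk k)) \<and>
        xk \<longlonglongrightarrow> xb \<and> yk \<longlonglongrightarrow> yb \<and> xsk \<longlonglongrightarrow> xs \<and>
        (\<lambda>k. (1 / norm (xk k - xb)) *\<^sub>R (xk k - xb)) \<longlonglongrightarrow> u \<and>
        (\<lambda>k. (1 / norm (xk k - xb)) *\<^sub>R (yk k - yb)) \<longlonglongrightarrow> 0 \<and>
        (\<lambda>k. (norm (yk k - yb) / norm (xk k - xb)) *\<^sub>R lk k) \<longlonglongrightarrow> ys \<and>
        filterlim (\<lambda>k. norm (lk k)) at_top sequentially \<and>
        (\<lambda>k. (1 / norm (yk k - yb)) *\<^sub>R (yk k - yb) - (1 / norm (lk k)) *\<^sub>R lk k) \<longlonglongrightarrow> 0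
      \<longrightarrow> xs \<in> im_lim_coderiv \<Phi> xb yb)"

definition M_stationary :: "('a::euclidean_space \<Rightarrow> real) \<Rightarrow> ('a \<Rightarrow> 'b::euclidean_space set) \<Rightarrow> 'b \<Rightarrow> 'a \<Rightarrow> bool" where
  "M_stationary \<phi> \<Phi> yb xb \<longleftrightarrow>
     (\<exists>l. \<exists>g\<in>lim_subdiff \<phi> xb. \<exists>h\<in>lim_coderiv \<Phi> xb yb l. g + h = 0)"

end

theory Submission
  imports Defs
begin

text \<open>Penalization. For c \<rightarrow> \<infinity> minimize \<phi> z + c (|x - z|^2 + |y - yb|^2) + |x - xb|^2
  over z near xb and (x, y) \<in> gph \<Phi> near (xb, yb). Local optimality of xb forces the minimizers
  (z_k, x_k, y_k) to converge to (xb, xb, yb), and Fermat's rule at them yields the regular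
  subgradient g_k = 2 c_k (x_k - z_k) of \<phi> at z_k, bounded by 2L, together with the regular normal
  (- g_k - 2 (x_k - xb), - \<lambda>_k) to gph \<Phi> at (x_k, y_k), where \<lambda>_k = 2 c_k (y_k - yb).
  If the multipliers \<lambda>_k have a bounded subsequence, passing to the limit gives M-stationarity.
  Otherwise the estimate c_k |y_k - yb|^2 \<le> L |x_k - xb| makes every cluster point u of the
  directions (x_k - xb) / |x_k - xb| a critical direction, and asymptotic regularity in direction u
  puts the limit of - g_k into the image of the limiting coderivative at (xb, yb).\<close>

section \<open>Proximal subgradients and normals are regular\<close>

lemma norm_add_power2:
  fixes a h :: "'a::real_inner"
  shows "norm (a + h)^2 = norm a^2 + 2 * (a \<bullet> h) + norm h^2"
  by (simp add: power2_norm_eq_inner algebra_simps inner_commute)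

lemma quadratic_le_linear_near_zero:
  fixes C e n :: real
  assumes "0 \<le> C" "0 \<le> n" "n < e / (C + 1)"
  shows "C * n^2 \<le> e * n"
proof -
  have "C * n \<le> (C + 1) * n" using assms(2) by (simp add: algebra_simps)
  also have "\<dots> < e" using assms(1,3) by (simp add: pos_less_divide_eq mult.commute)
  finally have "C * n \<le> e" by simp
  thus ?thesis using assms(2) by (simp add: power2_eq_square mult_right_mono flip: mult.assoc)
qed

lemma reg_subdiffI_quadratic:
  fixes f :: "'a::euclidean_space \<Rightarrow> real"
  assumes "r > 0" "C \<ge> 0"
    and "\<And>w. norm (w - z) < r \<Longrightarrow> v \<bullet> (w - z) - C * norm (w - z)^2 \<le> f w - f z"
  shows "v \<in> reg_subdiff f z"
  unfolding reg_subdiff_def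
proof (intro CollectI allI impI)
  fix e :: real assume "e > 0"
  show "\<exists>d>0. \<forall>w. norm (w - z) < d \<longrightarrow> f w - f z - v \<bullet> (w - z) \<ge> - e * norm (w - z)"
  proof (intro exI[of _ "min r (e / (C + 1))"] conjI allI impI)
    show "min r (e / (C + 1)) > 0" using assms \<open>e > 0\<close> by simp
    fix w assume "norm (w - z) < min r (e / (C + 1))"
    thus "f w - f z - v \<bullet> (w - z) \<ge> - e * norm (w - z)"
      using assms(3)[of w] quadratic_le_linear_near_zero[OF \<open>C \<ge> 0\<close> norm_ge_zero, of "w - z" e]
      by simp
  qed
qed

lemma reg_normal_coneI_quadratic:
  fixes S :: "'a::euclidean_space set"
  assumes "p \<in> S" "r > 0" "C \<ge> 0"
    and "\<And>q. q \<in> S \<Longrightarrow> norm (q - p) < r \<Longrightarrow> v \<bullet> (q - p) \<le> C * norm (q - p)^2"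
  shows "v \<in> reg_normal_cone S p"
  unfolding reg_normal_cone_def
proof (intro CollectI conjI allI impI \<open>p \<in> S\<close>)
  fix e :: real assume "e > 0"
  show "\<exists>d>0. \<forall>q\<in>S. norm (q - p) < d \<longrightarrow> v \<bullet> (q - p) \<le> e * norm (q - p)"
  proof (intro exI[of _ "min r (e / (C + 1))"] conjI ballI impI)
    show "min r (e / (C + 1)) > 0" using assms \<open>e > 0\<close> by simp
    fix q assume "q \<in> S" "norm (q - p) < min r (e / (C + 1))"
    thus "v \<bullet> (q - p) \<le> e * norm (q - p)"
      using assms(4)[of q] quadratic_le_linear_near_zero[OF \<open>C \<ge> 0\<close> norm_ge_zero, of "q - p" e]
      by simp
  qed
qed

section \<open>The penalized problem\<close>

locale penalized_problem =
  fixes \<phi> :: "'a::euclidean_space \<Rightarrow> real" and \<Phi> :: "'a \<Rightarrow> 'b::euclidean_space set"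
    and xb :: 'a and yb :: 'b and L \<delta> :: real
  assumes closed_gph: "closed (gph \<Phi>)"
    and yb_in_\<Phi>_xb: "yb \<in> \<Phi> xb"
    and \<delta>_pos: "\<delta> > 0" and L_pos: "L > 0"
    and lipschitz: "L-lipschitz_on (cball xb (2 * \<delta>)) \<phi>"
    and local_min: "\<And>x. yb \<in> \<Phi> x \<Longrightarrow> norm (x - xb) \<le> \<delta> \<Longrightarrow> \<phi> xb \<le> \<phi> x"
begin

definition penalty_domain :: "('a \<times> 'a \<times> 'b) set" where
  "penalty_domain = cball xb (2 * \<delta>) \<times> (gph \<Phi> \<inter> cball xb \<delta> \<times> cball yb 1)"

definition penalty :: "real \<Rightarrow> 'a \<Rightarrow> 'a \<Rightarrow> 'b \<Rightarrow> real" where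
  "penalty c z x y = \<phi> z + c * (norm (x - z)^2 + norm (y - yb)^2) + norm (x - xb)^2"

definition penalty_minimizer :: "real \<Rightarrow> 'a \<Rightarrow> 'a \<Rightarrow> 'b \<Rightarrow> bool" where
  "penalty_minimizer c z x y \<longleftrightarrow> (z, x, y) \<in> penalty_domain \<and>
     (\<forall>z' x' y'. (z', x', y') \<in> penalty_domain \<longrightarrow> penalty c z x y \<le> penalty c z' x' y')"

lemma mem_penalty_domain:
  "(z, x, y) \<in> penalty_domain \<longleftrightarrow>
     norm (z - xb) \<le> 2 * \<delta> \<and> y \<in> \<Phi> x \<and> norm (x - xb) \<le> \<delta> \<and> norm (y - yb) \<le> 1"
  by (auto simp: penalty_domain_def gph_def dist_norm norm_minus_commute)

lemma continuous_on_\<phi>: "continuous_on (cball xb (2 * \<delta>)) \<phi>"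
  using lipschitz by (rule lipschitz_on_continuous_on)

lemma \<phi>_diff_le:
  assumes "norm (p - xb) \<le> 2 * \<delta>" "norm (q - xb) \<le> 2 * \<delta>"
  shows "\<phi> p - \<phi> q \<le> L * norm (p - q)"
  using lipschitz_on_normD[OF lipschitz, of p q] assms
  by (simp add: dist_norm norm_minus_commute)

lemma penalty_minimizer_exists: "\<exists>z x y. penalty_minimizer c z x y"
proof -
  let ?F = "\<lambda>p. penalty c (fst p) (fst (snd p)) (snd (snd p))"
  have "compact penalty_domain"
    unfolding penalty_domain_def
    by (intro compact_Times compact_cball closed_Int_compact closed_gph)
  moreover have "(xb, xb, yb) \<in> penalty_domain"
    using yb_in_\<Phi>_xb \<delta>_pos by (simp add: mem_penalty_domain)
  moreover have "continuous_on penalty_domain ?F"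
  proof -
    have "fst ` penalty_domain \<subseteq> cball xb (2 * \<delta>)"
      by (auto simp: penalty_domain_def)
    then have "continuous_on penalty_domain (\<lambda>p. \<phi> (fst p))"
      by (intro continuous_on_compose2[OF continuous_on_\<phi>] continuous_intros)
    then show ?thesis
      unfolding penalty_def by (intro continuous_intros)
  qed
  ultimately obtain p where "p \<in> penalty_domain" "\<forall>q\<in>penalty_domain. ?F p \<le> ?F q"
    using continuous_attains_inf by blast
  then show ?thesis
    unfolding penalty_minimizer_def by (cases p) force
qed


context
  fixes c :: real and z x :: 'a and y :: 'b
  assumes minimizer: "penalty_minimizer c z x y"
    and c_large: "L \<le> c * \<delta>"
begin

lemma c_pos: "c > 0"
  using c_large L_pos \<delta>_pos by (smt (verit) mult_nonpos_nonneg)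

lemma minimizer_in_domain:
  "norm (z - xb) \<le> 2 * \<delta>" "y \<in> \<Phi> x" "norm (x - xb) \<le> \<delta>" "norm (y - yb) \<le> 1"
  using minimizer by (auto simp: penalty_minimizer_def mem_penalty_domain)

lemma penalty_minimizer_le:
  assumes "norm (z' - xb) \<le> 2 * \<delta>" "y' \<in> \<Phi> x'" "norm (x' - xb) \<le> \<delta>" "norm (y' - yb) \<le> 1"
  shows "\<phi> z + c * (norm (x - z)^2 + norm (y - yb)^2) + norm (x - xb)^2
    \<le> \<phi> z' + c * (norm (x' - z')^2 + norm (y' - yb)^2) + norm (x' - xb)^2"
  using minimizer assms unfolding penalty_minimizer_def mem_penalty_domain penalty_def by blast

lemma minimizer_value_le: "\<phi> z + c * (norm (x - z)^2 + norm (y - yb)^2) + norm (x - xb)^2 \<le> \<phi> xb"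
  using penalty_minimizer_le[of xb yb xb] yb_in_\<Phi>_xb \<delta>_pos by simp

lemma \<phi>_x_le: "\<phi> x \<le> \<phi> z + L * norm (x - z)"
  using \<phi>_diff_le[of x z] minimizer_in_domain \<delta>_pos by simp

lemma minimizer_dist_le: "norm (x - z) \<le> L / c"
proof -
  have "\<phi> z + c * norm (x - z)^2 \<le> \<phi> x"
    using penalty_minimizer_le[of x y x] minimizer_in_domain \<delta>_pos by (simp add: algebra_simps)
  with \<phi>_x_le have "c * norm (x - z) * norm (x - z) \<le> L * norm (x - z)"
    by (simp add: power2_eq_square mult.assoc)
  then have "c * norm (x - z) \<le> L"
    using L_pos by (cases "x = z") (simp_all add: mult_le_cancel_right)
  then show ?thesis
    using c_pos by (simp add: pos_le_divide_eq mult.commute)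
qed

text \<open>Compare with the competitor (z + (xb - x), xb, yb), which translates x to xb.\<close>
lemma minimizer_key_estimate: "c * norm (y - yb)^2 + norm (x - xb)^2 \<le> L * norm (x - xb)"
proof -
  define z' where "z' = z + (xb - x)"
  have "norm (z' - xb) = norm (x - z)"
    unfolding z'_def by (simp add: norm_minus_commute algebra_simps)
  also have "\<dots> \<le> L / c" by (rule minimizer_dist_le)
  also have "\<dots> \<le> \<delta>" using c_large c_pos by (simp add: divide_le_eq mult.commute)
  finally have z': "norm (z' - xb) \<le> 2 * \<delta>" using \<delta>_pos by simp
  have "\<phi> z + c * (norm (x - z)^2 + norm (y - yb)^2) + norm (x - xb)^2 \<le> \<phi> z' + c * norm (xb - z')^2"
    using penalty_minimizer_le[OF z' yb_in_\<Phi>_xb] \<delta>_pos by simp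
  moreover have "norm (xb - z') = norm (x - z)" unfolding z'_def by (simp add: algebra_simps)
  moreover have "\<phi> z' - \<phi> z \<le> L * norm (x - xb)"
    using \<phi>_diff_le[OF z' minimizer_in_domain(1)] unfolding z'_def by (simp add: norm_minus_commute)
  ultimately show ?thesis by (simp add: algebra_simps)
qed

lemma minimizer_y_eq:
  assumes "yb \<in> \<Phi> x"
  shows "y = yb"
proof -
  have "c * norm (y - yb)^2 \<le> 0"
    using penalty_minimizer_le[OF minimizer_in_domain(1) assms minimizer_in_domain(3)]
    by (simp add: algebra_simps)
  then show ?thesis using c_pos by (simp add: mult_le_0_iff)
qed

lemma minimizer_reg_subdiff:
  assumes "norm (z - xb) < 2 * \<delta>"
  shows "(2 * c) *\<^sub>R (x - z) \<in> reg_subdiff \<phi> z"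
proof (rule reg_subdiffI_quadratic)
  show "2 * \<delta> - norm (z - xb) > 0" "c \<ge> 0" using assms c_pos by auto
  fix w assume "norm (w - z) < 2 * \<delta> - norm (z - xb)"
  then have "norm (w - xb) \<le> 2 * \<delta>"
    using norm_triangle_ineq[of "w - z" "z - xb"] by simp
  then have "\<phi> z + c * norm (x - z)^2 \<le> \<phi> w + c * norm (x - w)^2"
    using penalty_minimizer_le[of w y x] minimizer_in_domain by (simp add: algebra_simps)
  moreover have "norm (x - w)^2 = norm (x - z)^2 - 2 * ((x - z) \<bullet> (w - z)) + norm (w - z)^2"
    using norm_add_power2[of "x - z" "- (w - z)"] by (simp add: norm_minus_commute inner_diff_right)
  ultimately show "(2 * c) *\<^sub>R (x - z) \<bullet> (w - z) - c * norm (w - z)^2 \<le> \<phi> w - \<phi> z"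
    by (simp add: algebra_simps)
qed

lemma minimizer_reg_normal:
  assumes "norm (x - xb) < \<delta>" "norm (y - yb) < 1"
  shows "(- (2 * c) *\<^sub>R (x - z) - 2 *\<^sub>R (x - xb), - (2 * c) *\<^sub>R (y - yb))
    \<in> reg_normal_cone (gph \<Phi>) (x, y)"
proof (rule reg_normal_coneI_quadratic)
  show "(x, y) \<in> gph \<Phi>" using minimizer_in_domain by (simp add: gph_def)
  show "min (\<delta> - norm (x - xb)) (1 - norm (y - yb)) > 0" "c + 1 \<ge> 0" using assms c_pos by auto
  fix q assume q: "q \<in> gph \<Phi>" "norm (q - (x, y)) < min (\<delta> - norm (x - xb)) (1 - norm (y - yb))"
  obtain hx hy where h: "q - (x, y) = (hx, hy)" by fastforce
  have "norm hx < \<delta> - norm (x - xb)" "norm hy < 1 - norm (y - yb)"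
    using q(2) norm_fst_le[of hx hy] norm_snd_le[of hy hx] unfolding h by auto
  then have "norm (x + hx - xb) \<le> \<delta>" "norm (y + hy - yb) \<le> 1"
    using norm_triangle_ineq[of hx "x - xb"] norm_triangle_ineq[of hy "y - yb"]
    by (simp_all add: algebra_simps)
  moreover have "y + hy \<in> \<Phi> (x + hx)"
    using q(1) h by (auto simp: gph_def prod_eq_iff)
  ultimately have "c * (norm (x - z)^2 + norm (y - yb)^2) + norm (x - xb)^2
    \<le> c * (norm ((x - z) + hx)^2 + norm ((y - yb) + hy)^2) + norm ((x - xb) + hx)^2"
    using penalty_minimizer_le[of z "y + hy" "x + hx"] minimizer_in_domain
    by (simp add: algebra_simps)
  then have "- (2 * c) * ((x - z) \<bullet> hx) - 2 * ((x - xb) \<bullet> hx) - (2 * c) * ((y - yb) \<bullet> hy)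
      \<le> (c + 1) * norm hx^2 + c * norm hy^2"
    unfolding norm_add_power2 by (simp add: algebra_simps)
  also have "\<dots> \<le> (c + 1) * norm (q - (x, y))^2"
    using c_pos unfolding h norm_Pair by (simp add: algebra_simps)
  finally show "(- (2 * c) *\<^sub>R (x - z) - 2 *\<^sub>R (x - xb), - (2 * c) *\<^sub>R (y - yb)) \<bullet> (q - (x, y))
      \<le> (c + 1) * norm (q - (x, y))^2"
    unfolding h by (simp add: inner_diff_left algebra_simps)
qed

end

end

section \<open>Sequences of penalized minimizers\<close>

lemma frequently_bounded_imp_convergent_subseq:
  fixes f :: "nat \<Rightarrow> 'a::heine_borel"
  assumes "\<exists>\<^sub>F k in sequentially. P k" and "bounded (f ` {k. P k})"
  obtains r :: "nat \<Rightarrow> nat" and l where "strict_mono r" "\<And>k. P (r k)" "(f \<circ> r) \<longlonglongrightarrow> l"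
proof -
  have inf: "infinite {k. P k}"
    using assms(1) frequently_cofinite[of P] by (simp add: cofinite_eq_sequentially)
  obtain r :: "nat \<Rightarrow> nat" where r: "strict_mono r" "\<And>k. P (r k)"
    using infinite_enumerate[OF inf] by blast
  then have "range (f \<circ> r) \<subseteq> f ` {k. P k}" by auto
  then have "bounded (range (f \<circ> r))" using assms(2) bounded_subset by blast
  then obtain l r' where r': "strict_mono r'" and l: "((f \<circ> r) \<circ> r') \<longlonglongrightarrow> l"
    by (metis bounded_imp_convergent_subsequence)
  show ?thesis
  proof (rule that)
    show "strict_mono (r \<circ> r')" using r(1) r' by (rule strict_mono_o)
    show "P ((r \<circ> r') k)" for k using r(2) by simp
    show "(f \<circ> (r \<circ> r')) \<longlonglongrightarrow> l" using l by (simp add: o_assoc)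
  qed
qed

locale penalized_sequence = penalized_problem +
  fixes c :: "nat \<Rightarrow> real" and z x :: "nat \<Rightarrow> 'a" and y :: "nat \<Rightarrow> 'b"
  assumes minimizers: "\<And>k. penalty_minimizer (c k) (z k) (x k) (y k)"
    and c_large: "\<And>k. L \<le> c k * \<delta>"
    and c_tendsto_top: "filterlim c at_top sequentially"
begin

lemma x_minus_z_tendsto_0: "(\<lambda>k. x k - z k) \<longlonglongrightarrow> 0"
proof (rule Lim_null_comparison)
  show "\<forall>\<^sub>F k in sequentially. norm (x k - z k) \<le> L * inverse (c k)"
    using minimizer_dist_le[OF minimizers c_large] by (auto simp: divide_inverse intro: always_eventually)
  show "(\<lambda>k. L * inverse (c k)) \<longlonglongrightarrow> 0"
    using tendsto_mult_right_zero[OF tendsto_inverse_0_at_top[OF c_tendsto_top]] .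
qed

lemma y_tendsto: "y \<longlonglongrightarrow> yb"
proof -
  have "norm (y k - yb) \<le> sqrt (L * \<delta> * inverse (c k))" for k
  proof -
    have "c k * norm (y k - yb)^2 \<le> L * norm (x k - xb)"
      using minimizer_key_estimate[OF minimizers c_large, of k] zero_le_power2[of "norm (x k - xb)"]
      by linarith
    also have "\<dots> \<le> L * \<delta>"
      using minimizer_in_domain(3)[OF minimizers c_large] L_pos by simp
    finally have "norm (y k - yb)^2 \<le> L * \<delta> / c k"
      using c_pos[OF minimizers c_large, of k] by (simp add: pos_le_divide_eq mult.commute)
    then show ?thesis
      by (simp add: real_le_rsqrt divide_inverse)
  qed
  moreover have "(\<lambda>k. sqrt (L * \<delta> * inverse (c k))) \<longlonglongrightarrow> 0"
    using tendsto_real_sqrt[OF tendsto_mult_right_zero[OF tendsto_inverse_0_at_top[OF c_tendsto_top]]]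
    by simp
  ultimately have "(\<lambda>k. y k - yb) \<longlonglongrightarrow> 0"
    by (metis (mono_tags, lifting) Lim_null_comparison always_eventually)
  then show ?thesis by (simp add: LIM_zero_iff)
qed

text \<open>A cluster point x' of the x k different from xb would be feasible for (P) with a value
  strictly below \<phi> xb, since the term norm (x k - xb)^2 of the penalty stays bounded away from 0.\<close>
lemma x_tendsto: "x \<longlonglongrightarrow> xb"
proof (rule ccontr)
  assume "\<not> x \<longlonglongrightarrow> xb"
  then obtain \<eta> where "\<eta> > 0" and frequently_far: "\<exists>\<^sub>F k in sequentially. \<eta> \<le> norm (x k - xb)"
    unfolding tendsto_iff by (auto simp: not_eventually dist_norm not_less)
  have bounded: "bounded (x ` {k. \<eta> \<le> norm (x k - xb)})"
    using minimizer_in_domain(3)[OF minimizers c_large]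
    by (intro bounded_subset[OF bounded_cball[of xb \<delta>]]) (auto simp: dist_norm norm_minus_commute)
  obtain \<sigma> x' where \<sigma>: "strict_mono \<sigma>" and far: "\<And>k. \<eta> \<le> norm (x (\<sigma> k) - xb)"
    and x\<sigma>: "(x \<circ> \<sigma>) \<longlonglongrightarrow> x'"
    using frequently_bounded_imp_convergent_subseq[OF frequently_far bounded] by blast
  have x'_near: "x' \<in> cball xb \<delta>"
    using minimizer_in_domain(3)[OF minimizers c_large]
    by (intro Lim_in_closed_set[OF closed_cball _ _ x\<sigma>]) (auto simp: dist_norm norm_minus_commute)
  have "(x', yb) \<in> gph \<Phi>"
  proof (rule Lim_in_closed_set[OF closed_gph])
    show "((\<lambda>k. (x (\<sigma> k), y (\<sigma> k))) \<longlongrightarrow> (x', yb)) sequentially"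
      using x\<sigma> LIMSEQ_subseq_LIMSEQ[OF y_tendsto \<sigma>] by (intro tendsto_Pair) (simp_all add: o_def)
  qed (use minimizer_in_domain(2)[OF minimizers c_large] in \<open>auto simp: gph_def\<close>)
  then have "\<phi> xb \<le> \<phi> x'"
    using x'_near by (intro local_min) (auto simp: gph_def dist_norm norm_minus_commute)
  moreover have "(\<lambda>k. \<phi> (z (\<sigma> k))) \<longlonglongrightarrow> \<phi> x'"
  proof (rule continuous_on_tendsto_compose[OF continuous_on_\<phi>])
    show "(\<lambda>k. z (\<sigma> k)) \<longlonglongrightarrow> x'"
      using tendsto_diff[OF x\<sigma> LIMSEQ_subseq_LIMSEQ[OF x_minus_z_tendsto_0 \<sigma>]] by (simp add: o_def)
    show "x' \<in> cball xb (2 * \<delta>)" using x'_near \<delta>_pos by auto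
    show "\<forall>\<^sub>F k in sequentially. z (\<sigma> k) \<in> cball xb (2 * \<delta>)"
      using minimizer_in_domain(1)[OF minimizers c_large] by (simp add: dist_norm norm_minus_commute)
  qed
  moreover have "\<phi> (z (\<sigma> k)) \<le> \<phi> xb - \<eta>^2" for k
  proof -
    have "\<eta>^2 \<le> norm (x (\<sigma> k) - xb)^2"
      using far[of k] \<open>\<eta> > 0\<close> by (simp add: power_mono)
    moreover have "0 \<le> c (\<sigma> k) * (norm (x (\<sigma> k) - z (\<sigma> k))^2 + norm (y (\<sigma> k) - yb)^2)"
      using c_pos[OF minimizers c_large, of "\<sigma> k"] by simp
    ultimately show ?thesis
      using minimizer_value_le[OF minimizers c_large, of "\<sigma> k"] by linarith
  qed
  ultimately have "\<phi> x' \<le> \<phi> xb - \<eta>^2"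
    by (intro LIMSEQ_le_const2) auto
  with \<open>\<phi> xb \<le> \<phi> x'\<close> \<open>\<eta> > 0\<close> show False
    by (smt (verit) zero_less_power)
qed

lemma z_tendsto: "z \<longlonglongrightarrow> xb"
  using tendsto_diff[OF x_tendsto x_minus_z_tendsto_0] by simp


definition in_interior :: "nat \<Rightarrow> bool" where
  "in_interior k \<longleftrightarrow> norm (z k - xb) < 2 * \<delta> \<and> norm (x k - xb) < \<delta> \<and> norm (y k - yb) < 1"

definition subgrad :: "nat \<Rightarrow> 'a" where
  "subgrad k = (2 * c k) *\<^sub>R (x k - z k)"

definition multiplier :: "nat \<Rightarrow> 'b" where
  "multiplier k = (2 * c k) *\<^sub>R (y k - yb)"

definition coderiv_vector :: "nat \<Rightarrow> 'a" where
  "coderiv_vector k = - subgrad k - 2 *\<^sub>R (x k - xb)"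

lemma eventually_in_interior: "\<forall>\<^sub>F k in sequentially. in_interior k"
proof -
  have "\<forall>\<^sub>F k in sequentially. dist (z k) xb < 2 * \<delta>"
    using tendstoD[OF z_tendsto] \<delta>_pos by simp
  moreover have "\<forall>\<^sub>F k in sequentially. dist (x k) xb < \<delta>"
    using tendstoD[OF x_tendsto \<delta>_pos] .
  moreover have "\<forall>\<^sub>F k in sequentially. dist (y k) yb < 1"
    using tendstoD[OF y_tendsto] by simp
  ultimately show ?thesis
    unfolding in_interior_def dist_norm by eventually_elim simp
qed

lemma subgrad_reg_subdiff: "in_interior k \<Longrightarrow> subgrad k \<in> reg_subdiff \<phi> (z k)"
  unfolding in_interior_def subgrad_def by (intro minimizer_reg_subdiff[OF minimizers c_large]) simp

lemma coderiv_vector_reg_coderiv: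
  "in_interior k \<Longrightarrow> coderiv_vector k \<in> reg_coderiv \<Phi> (x k) (y k) (multiplier k)"
  using minimizer_reg_normal[OF minimizers c_large, of k]
  unfolding in_interior_def coderiv_vector_def subgrad_def multiplier_def reg_coderiv_def by simp

lemma norm_subgrad_le: "norm (subgrad k) \<le> 2 * L"
proof -
  have "c k > 0" by (rule c_pos[OF minimizers c_large])
  then have "c k * norm (x k - z k) \<le> L"
    using minimizer_dist_le[OF minimizers c_large, of k] by (simp add: field_simps)
  with \<open>c k > 0\<close> show ?thesis by (simp add: subgrad_def)
qed

lemma norm_multiplier: "norm (multiplier k) = 2 * c k * norm (y k - yb)"
  using c_pos[OF minimizers c_large, of k] by (simp add: multiplier_def)

lemma subgrad_limit_in_lim_subdiff:
  assumes "strict_mono \<sigma>" "\<And>k. in_interior (\<sigma> k)" "(subgrad \<circ> \<sigma>) \<longlonglongrightarrow> gs"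
  shows "gs \<in> lim_subdiff \<phi> xb"
proof -
  have z\<sigma>: "(z \<circ> \<sigma>) \<longlonglongrightarrow> xb"
    using LIMSEQ_subseq_LIMSEQ[OF z_tendsto assms(1)] .
  moreover have "(\<lambda>k. \<phi> ((z \<circ> \<sigma>) k)) \<longlonglongrightarrow> \<phi> xb"
    using minimizer_in_domain(1)[OF minimizers c_large] \<delta>_pos
    by (intro continuous_on_tendsto_compose[OF continuous_on_\<phi> z\<sigma>])
      (auto simp: dist_norm norm_minus_commute)
  ultimately show ?thesis
    unfolding lim_subdiff_def using assms(3) subgrad_reg_subdiff[OF assms(2)]
    by (intro CollectI exI[of _ "z \<circ> \<sigma>"] exI[of _ "subgrad \<circ> \<sigma>"]) auto
qed

lemma coderiv_vector_tendsto:
  assumes "strict_mono \<sigma>" "(subgrad \<circ> \<sigma>) \<longlonglongrightarrow> gs"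
  shows "(coderiv_vector \<circ> \<sigma>) \<longlonglongrightarrow> - gs"
proof -
  have "(\<lambda>k. x (\<sigma> k) - xb) \<longlonglongrightarrow> 0"
    using LIMSEQ_subseq_LIMSEQ[OF x_tendsto assms(1)] by (simp add: o_def LIM_zero_iff)
  from tendsto_diff[OF tendsto_minus[OF assms(2)] tendsto_scaleR[OF tendsto_const this]]
  show ?thesis by (simp add: o_def coderiv_vector_def)
qed

lemma M_stationary_if_bounded_multipliers:
  assumes "\<exists>\<^sub>F k in sequentially. norm (multiplier k) \<le> B"
  shows "M_stationary \<phi> \<Phi> yb xb"
proof -
  let ?P = "\<lambda>k. in_interior k \<and> norm (multiplier k) \<le> B"
  have "\<exists>\<^sub>F k in sequentially. ?P k"
    using frequently_eventually_conj[OF assms eventually_in_interior] .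
  moreover have "bounded ((\<lambda>k. (subgrad k, multiplier k)) ` {k. ?P k})"
  proof (rule bounded_subset)
    show "bounded (cball 0 (2 * L) \<times> cball 0 B)"
      by (intro bounded_Times bounded_cball)
    show "(\<lambda>k. (subgrad k, multiplier k)) ` {k. ?P k} \<subseteq> cball 0 (2 * L) \<times> cball 0 B"
      using norm_subgrad_le by auto
  qed
  ultimately obtain \<sigma> l where \<sigma>: "strict_mono \<sigma>" "\<And>k. ?P (\<sigma> k)"
    and lim: "((\<lambda>k. (subgrad k, multiplier k)) \<circ> \<sigma>) \<longlonglongrightarrow> l"
    by (rule frequently_bounded_imp_convergent_subseq) blast
  obtain gs ls where l: "l = (gs, ls)" by fastforce
  have gs: "(subgrad \<circ> \<sigma>) \<longlonglongrightarrow> gs" and ls: "(multiplier \<circ> \<sigma>) \<longlonglongrightarrow> ls"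
    using tendsto_fst[OF lim] tendsto_snd[OF lim] by (simp_all add: o_def l)
  have "- gs \<in> lim_coderiv \<Phi> xb yb ls"
    unfolding lim_coderiv_def lim_normal_cone_def mem_Collect_eq
  proof (intro conjI exI)
    show "(xb, yb) \<in> gph \<Phi>" using yb_in_\<Phi>_xb by (simp add: gph_def)
    show "\<forall>k. (x (\<sigma> k), y (\<sigma> k)) \<in> gph \<Phi> \<and>
        (coderiv_vector (\<sigma> k), - multiplier (\<sigma> k)) \<in> reg_normal_cone (gph \<Phi>) (x (\<sigma> k), y (\<sigma> k))"
      using coderiv_vector_reg_coderiv \<sigma>(2) minimizer_in_domain(2)[OF minimizers c_large]
      by (simp add: reg_coderiv_def gph_def)
    show "(\<lambda>k. (x (\<sigma> k), y (\<sigma> k))) \<longlonglongrightarrow> (xb, yb)"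
      using LIMSEQ_subseq_LIMSEQ[OF x_tendsto \<sigma>(1)] LIMSEQ_subseq_LIMSEQ[OF y_tendsto \<sigma>(1)]
      by (intro tendsto_Pair) (simp_all add: o_def)
    show "(\<lambda>k. (coderiv_vector (\<sigma> k), - multiplier (\<sigma> k))) \<longlonglongrightarrow> (- gs, - ls)"
      using coderiv_vector_tendsto[OF \<sigma>(1) gs] tendsto_minus[OF ls]
      by (intro tendsto_Pair) (simp_all add: o_def)
  qed
  moreover have "gs \<in> lim_subdiff \<phi> xb"
    using subgrad_limit_in_lim_subdiff[OF \<sigma>(1) _ gs] \<sigma>(2) by blast
  ultimately show ?thesis
    unfolding M_stationary_def by (metis add.right_inverse)
qed

definition direction :: "nat \<Rightarrow> 'a" where
  "direction k = (1 / norm (x k - xb)) *\<^sub>R (x k - xb)"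

definition scaled_multiplier :: "nat \<Rightarrow> 'b" where
  "scaled_multiplier k = (norm (y k - yb) / norm (x k - xb)) *\<^sub>R multiplier k"

context
  fixes k assumes multiplier_nonzero: "multiplier k \<noteq> 0"
begin

lemma y_neq_yb: "y k \<noteq> yb"
  using multiplier_nonzero by (simp add: multiplier_def)

lemma yb_notin_\<Phi>_x: "yb \<notin> \<Phi> (x k)"
  using y_neq_yb minimizer_y_eq[OF minimizers c_large] by blast

lemma x_neq_xb: "x k \<noteq> xb"
  using yb_notin_\<Phi>_x yb_in_\<Phi>_xb by blast

lemma norm_direction: "norm (direction k) = 1"
  using x_neq_xb by (simp add: direction_def)

lemma key_estimate_quotient: "c k * norm (y k - yb)^2 / norm (x k - xb) \<le> L"
proof -
  have "c k * norm (y k - yb)^2 \<le> L * norm (x k - xb)"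
    using minimizer_key_estimate[OF minimizers c_large, of k] zero_le_power2[of "norm (x k - xb)"]
    by linarith
  then show ?thesis using x_neq_xb by (simp add: divide_le_eq)
qed

lemma norm_scaled_multiplier_le: "norm (scaled_multiplier k) \<le> 2 * L"
proof -
  have "norm (scaled_multiplier k) = 2 * (c k * norm (y k - yb)^2 / norm (x k - xb))"
    using c_pos[OF minimizers c_large, of k] x_neq_xb
    by (simp add: scaled_multiplier_def norm_multiplier power2_eq_square field_simps)
  with key_estimate_quotient show ?thesis by simp
qed

lemma dy_over_dx_le: "norm (y k - yb) / norm (x k - xb) \<le> 2 * L / norm (multiplier k)"
  using key_estimate_quotient c_pos[OF minimizers c_large, of k] y_neq_yb x_neq_xb
  by (simp add: norm_multiplier field_simps power2_eq_square)

text \<open>\<phi> (x k) exceeds \<phi> xb by at most L^2 / c k, which the key estimate bounds by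
  norm (x k - xb) times a quantity tending to 0 when the multipliers blow up.\<close>
lemma \<phi>_x_le_critical: "\<phi> (x k) \<le> \<phi> xb + norm (x k - xb) * (4 * L^3 / norm (multiplier k)^2)"
proof -
  have c: "c k > 0" by (rule c_pos[OF minimizers c_large])
  have "\<phi> (z k) \<le> \<phi> xb"
    using minimizer_value_le[OF minimizers c_large, of k] c by (smt (verit) zero_le_power2 mult_nonneg_nonneg)
  moreover have "\<phi> (x k) \<le> \<phi> (z k) + L * (L / c k)"
    using \<phi>_x_le[OF minimizers c_large, of k] minimizer_dist_le[OF minimizers c_large, of k] L_pos
    by (smt (verit) mult_left_mono)
  moreover have "L * (L / c k) \<le> norm (x k - xb) * (4 * L^3 / norm (multiplier k)^2)"
    using key_estimate_quotient c L_pos y_neq_yb x_neq_xb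
    by (simp add: norm_multiplier field_simps power2_eq_square power3_eq_cube)
  ultimately show ?thesis by linarith
qed

end

lemma eventually_multiplier_nonzero:
  assumes "filterlim (\<lambda>k. norm (multiplier k)) at_top sequentially"
  shows "\<forall>\<^sub>F k in sequentially. multiplier k \<noteq> 0"
  using assms unfolding filterlim_at_top_dense by (auto elim: eventually_mono[OF spec[of _ 0]])

lemma dy_over_dx_tendsto_0:
  assumes "filterlim (\<lambda>k. norm (multiplier k)) at_top sequentially"
  shows "(\<lambda>k. (1 / norm (x k - xb)) *\<^sub>R (y k - yb)) \<longlonglongrightarrow> 0"
proof (rule Lim_null_comparison)
  show "\<forall>\<^sub>F k in sequentially. norm ((1 / norm (x k - xb)) *\<^sub>R (y k - yb)) \<le> 2 * L * inverse (norm (multiplier k))"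
    using eventually_multiplier_nonzero[OF assms]
    by eventually_elim (use dy_over_dx_le in \<open>simp add: divide_inverse mult.commute\<close>)
  show "(\<lambda>k. 2 * L * inverse (norm (multiplier k))) \<longlonglongrightarrow> 0"
    using tendsto_mult_right_zero[OF tendsto_inverse_0_at_top[OF assms]] .
qed


lemma critical_direction_of_subseq:
  assumes unbounded: "filterlim (\<lambda>k. norm (multiplier k)) at_top sequentially"
    and \<sigma>: "strict_mono \<sigma>" "\<And>k. multiplier (\<sigma> k) \<noteq> 0"
    and us: "(direction \<circ> \<sigma>) \<longlonglongrightarrow> us"
  shows "critical_direction \<phi> \<Phi> yb xb us"
  unfolding critical_direction_def
proof (intro exI conjI allI)
  let ?t = "\<lambda>k. norm (x (\<sigma> k) - xb)"
  show "(\<lambda>k. direction (\<sigma> k)) \<longlonglongrightarrow> us" using us by (simp add: o_def)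
  show "(\<lambda>k. 4 * L^3 / norm (multiplier (\<sigma> k))^2) \<longlonglongrightarrow> 0"
  proof -
    have "(\<lambda>k. inverse (norm (multiplier (\<sigma> k)))) \<longlonglongrightarrow> 0"
      using LIMSEQ_subseq_LIMSEQ[OF tendsto_inverse_0_at_top[OF unbounded] \<sigma>(1)] by (simp add: o_def)
    from tendsto_mult_right_zero[OF tendsto_mult_zero[OF this this], of "4 * L^3"]
    show ?thesis by (simp add: divide_inverse power2_eq_square)
  qed
  show "(\<lambda>k. (1 / ?t k) *\<^sub>R (y (\<sigma> k) - yb)) \<longlonglongrightarrow> 0"
    using LIMSEQ_subseq_LIMSEQ[OF dy_over_dx_tendsto_0[OF unbounded] \<sigma>(1)] by (simp add: o_def)
  show "?t \<longlonglongrightarrow> 0"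
    using LIMSEQ_subseq_LIMSEQ[OF x_tendsto \<sigma>(1)] by (simp add: o_def tendsto_norm_zero_iff LIM_zero_iff)
  fix k
  have x: "xb + ?t k *\<^sub>R direction (\<sigma> k) = x (\<sigma> k)"
    using x_neq_xb[OF \<sigma>(2)] by (simp add: direction_def)
  show "?t k > 0" using x_neq_xb[OF \<sigma>(2)] by simp
  show "\<phi> (xb + ?t k *\<^sub>R direction (\<sigma> k))
      \<le> \<phi> xb + ?t k * norm (direction (\<sigma> k)) * (4 * L^3 / norm (multiplier (\<sigma> k))^2)"
    unfolding x norm_direction[OF \<sigma>(2)] using \<phi>_x_le_critical[OF \<sigma>(2)] by simp
  show "yb + (?t k * norm (direction (\<sigma> k))) *\<^sub>R ((1 / ?t k) *\<^sub>R (y (\<sigma> k) - yb))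
      \<in> \<Phi> (xb + ?t k *\<^sub>R direction (\<sigma> k))"
    unfolding x norm_direction[OF \<sigma>(2)]
    using x_neq_xb[OF \<sigma>(2)] minimizer_in_domain(2)[OF minimizers c_large] by simp
qed


lemma im_lim_coderiv_of_subseq:
  assumes unbounded: "filterlim (\<lambda>k. norm (multiplier k)) at_top sequentially"
    and \<sigma>: "strict_mono \<sigma>" "\<And>k. in_interior (\<sigma> k)" "\<And>k. multiplier (\<sigma> k) \<noteq> 0"
    and gs: "(subgrad \<circ> \<sigma>) \<longlonglongrightarrow> gs" and us: "(direction \<circ> \<sigma>) \<longlonglongrightarrow> us"
    and ws: "(scaled_multiplier \<circ> \<sigma>) \<longlonglongrightarrow> ws"
    and regular: "asymptotically_regular \<Phi> xb yb us"
  shows "- gs \<in> im_lim_coderiv \<Phi> xb yb"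
proof (rule regular[unfolded asymptotically_regular_def, rule_format,
      where xk = "x \<circ> \<sigma>" and yk = "y \<circ> \<sigma>" and lk = "multiplier \<circ> \<sigma>"
      and xsk = "coderiv_vector \<circ> \<sigma>" and ys = ws],
    intro conjI allI)
  fix k
  show "(y \<circ> \<sigma>) k \<in> \<Phi> ((x \<circ> \<sigma>) k)" "yb \<notin> \<Phi> ((x \<circ> \<sigma>) k)" "(y \<circ> \<sigma>) k \<noteq> yb"
    using minimizer_in_domain(2)[OF minimizers c_large] yb_notin_\<Phi>_x[OF \<sigma>(3)] y_neq_yb[OF \<sigma>(3)] by simp_all
  show "(coderiv_vector \<circ> \<sigma>) k \<in> reg_coderiv \<Phi> ((x \<circ> \<sigma>) k) ((y \<circ> \<sigma>) k) ((multiplier \<circ> \<sigma>) k)"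
    using coderiv_vector_reg_coderiv[OF \<sigma>(2)] by simp
next
  show "(x \<circ> \<sigma>) \<longlonglongrightarrow> xb" "(y \<circ> \<sigma>) \<longlonglongrightarrow> yb"
    using LIMSEQ_subseq_LIMSEQ[OF x_tendsto \<sigma>(1)] LIMSEQ_subseq_LIMSEQ[OF y_tendsto \<sigma>(1)] .
  show "(coderiv_vector \<circ> \<sigma>) \<longlonglongrightarrow> - gs"
    using coderiv_vector_tendsto[OF \<sigma>(1) gs] .
  show "(\<lambda>k. (1 / norm ((x \<circ> \<sigma>) k - xb)) *\<^sub>R ((x \<circ> \<sigma>) k - xb)) \<longlonglongrightarrow> us"
    using us by (simp add: o_def direction_def)
  show "(\<lambda>k. (1 / norm ((x \<circ> \<sigma>) k - xb)) *\<^sub>R ((y \<circ> \<sigma>) k - yb)) \<longlonglongrightarrow> 0"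
    using LIMSEQ_subseq_LIMSEQ[OF dy_over_dx_tendsto_0[OF unbounded] \<sigma>(1)] by (simp add: o_def)
  show "(\<lambda>k. (norm ((y \<circ> \<sigma>) k - yb) / norm ((x \<circ> \<sigma>) k - xb)) *\<^sub>R (multiplier \<circ> \<sigma>) k) \<longlonglongrightarrow> ws"
    using ws by (simp add: o_def scaled_multiplier_def)
  show "filterlim (\<lambda>k. norm ((multiplier \<circ> \<sigma>) k)) at_top sequentially"
    using filterlim_compose[OF unbounded filterlim_subseq[OF \<sigma>(1)]] by (simp add: o_def)
  have "(1 / norm ((y \<circ> \<sigma>) k - yb)) *\<^sub>R ((y \<circ> \<sigma>) k - yb)
      = (1 / norm ((multiplier \<circ> \<sigma>) k)) *\<^sub>R (multiplier \<circ> \<sigma>) k" for k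
    using c_pos[OF minimizers c_large, of "\<sigma> k"] by (simp add: norm_multiplier multiplier_def)
  then show "(\<lambda>k. (1 / norm ((y \<circ> \<sigma>) k - yb)) *\<^sub>R ((y \<circ> \<sigma>) k - yb)
      - (1 / norm ((multiplier \<circ> \<sigma>) k)) *\<^sub>R (multiplier \<circ> \<sigma>) k) \<longlonglongrightarrow> 0"
    by simp
qed


lemma M_stationary_if_unbounded_multipliers:
  assumes unbounded: "filterlim (\<lambda>k. norm (multiplier k)) at_top sequentially"
    and regular: "\<And>u. norm u = 1 \<Longrightarrow> critical_direction \<phi> \<Phi> yb xb u \<Longrightarrow> asymptotically_regular \<Phi> xb yb u"
  shows "M_stationary \<phi> \<Phi> yb xb"
proof -
  let ?P = "\<lambda>k. in_interior k \<and> multiplier k \<noteq> 0"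
  let ?f = "\<lambda>k. (subgrad k, direction k, scaled_multiplier k)"
  have "\<exists>\<^sub>F k in sequentially. ?P k"
    using eventually_frequently[OF trivial_limit_sequentially
        eventually_conj[OF eventually_in_interior eventually_multiplier_nonzero[OF unbounded]]] .
  moreover have "bounded (?f ` {k. ?P k})"
  proof (rule bounded_subset)
    show "bounded (cball 0 (2 * L) \<times> cball 0 1 \<times> cball 0 (2 * L))"
      by (intro bounded_Times bounded_cball)
    show "?f ` {k. ?P k} \<subseteq> cball 0 (2 * L) \<times> cball 0 1 \<times> cball 0 (2 * L)"
      using norm_subgrad_le norm_direction norm_scaled_multiplier_le by auto
  qed
  ultimately obtain \<sigma> l where \<sigma>: "strict_mono \<sigma>" "\<And>k. ?P (\<sigma> k)" and lim: "(?f \<circ> \<sigma>) \<longlonglongrightarrow> l"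
    by (rule frequently_bounded_imp_convergent_subseq) blast
  obtain gs us ws where l: "l = (gs, us, ws)" by (cases l) auto
  have gs: "(subgrad \<circ> \<sigma>) \<longlonglongrightarrow> gs" and us: "(direction \<circ> \<sigma>) \<longlonglongrightarrow> us"
    and ws: "(scaled_multiplier \<circ> \<sigma>) \<longlonglongrightarrow> ws"
    using tendsto_fst[OF lim] tendsto_fst[OF tendsto_snd[OF lim]] tendsto_snd[OF tendsto_snd[OF lim]]
    by (simp_all add: o_def l)
  have "norm us = 1"
  proof (rule LIMSEQ_unique)
    show "(\<lambda>k. norm ((direction \<circ> \<sigma>) k)) \<longlonglongrightarrow> norm us" using tendsto_norm[OF us] .
    show "(\<lambda>k. norm ((direction \<circ> \<sigma>) k)) \<longlonglongrightarrow> 1" using norm_direction \<sigma>(2) by simp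
  qed
  moreover have "critical_direction \<phi> \<Phi> yb xb us"
    using critical_direction_of_subseq[OF unbounded \<sigma>(1) _ us] \<sigma>(2) by blast
  ultimately have "- gs \<in> im_lim_coderiv \<Phi> xb yb"
    using im_lim_coderiv_of_subseq[OF unbounded \<sigma>(1) _ _ gs us ws] \<sigma>(2) regular by blast
  moreover have "gs \<in> lim_subdiff \<phi> xb"
    using subgrad_limit_in_lim_subdiff[OF \<sigma>(1) _ gs] \<sigma>(2) by blast
  ultimately show ?thesis
    unfolding M_stationary_def im_lim_coderiv_def by (metis UN_E add.right_inverse)
qed

lemma M_stationary_if_asymptotically_regular:
  assumes "\<And>u. norm u = 1 \<Longrightarrow> critical_direction \<phi> \<Phi> yb xb u \<Longrightarrow> asymptotically_regular \<Phi> xb yb u"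
  shows "M_stationary \<phi> \<Phi> yb xb"
proof (cases "filterlim (\<lambda>k. norm (multiplier k)) at_top sequentially")
  case True
  then show ?thesis using M_stationary_if_unbounded_multipliers assms by blast
next
  case False
  then obtain B where "\<exists>\<^sub>F k in sequentially. norm (multiplier k) \<le> B"
    unfolding filterlim_at_top_dense by (auto simp: not_eventually not_less)
  then show ?thesis by (rule M_stationary_if_bounded_multipliers)
qed

end

theorem corollary5p5:
  fixes \<phi> :: "'a::euclidean_space \<Rightarrow> real"
    and \<Phi> :: "'a \<Rightarrow> 'b::euclidean_space set"
    and xb :: 'a and yb :: 'b
  assumes "locally_lipschitz \<phi>"
    and "closed (gph \<Phi>)"
    and "\<exists>x. yb \<in> \<Phi> x"
    and "local_minimizer_P \<phi> \<Phi> yb xb"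
    and "\<And>u. norm u = 1 \<Longrightarrow> critical_direction \<phi> \<Phi> yb xb u \<Longrightarrow>
           asymptotically_regular \<Phi> xb yb u"
  shows "M_stationary \<phi> \<Phi> yb xb"
proof -
  \<comment> \<open>assms(3) is implied by assms(4).\<close>
  obtain d0 L0 where "d0 > 0" and lip: "L0-lipschitz_on (ball xb d0) \<phi>"
    using assms(1) unfolding locally_lipschitz_def by blast
  obtain d1 where "d1 > 0" and "yb \<in> \<Phi> xb" and min: "\<And>x. yb \<in> \<Phi> x \<Longrightarrow> dist x xb < d1 \<Longrightarrow> \<phi> xb \<le> \<phi> x"
    using assms(4) unfolding local_minimizer_P_def by blast
  define \<delta> where "\<delta> = min (d0 / 4) (d1 / 2)"
  define L where "L = L0 + 1"
  have "\<delta> > 0" using \<open>d0 > 0\<close> \<open>d1 > 0\<close> by (simp add: \<delta>_def)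
  interpret penalized_problem \<phi> \<Phi> xb yb L \<delta>
  proof
    have "cball xb (2 * \<delta>) \<subseteq> ball xb d0" using \<open>d0 > 0\<close> by (auto simp: \<delta>_def)
    then show "L-lipschitz_on (cball xb (2 * \<delta>)) \<phi>"
      by (rule lipschitz_on_mono[OF lip]) (simp add: L_def)
    show "L > 0" using lipschitz_on_nonneg[OF lip] by (simp add: L_def)
    show "\<phi> xb \<le> \<phi> x" if "yb \<in> \<Phi> x" "norm (x - xb) \<le> \<delta>" for x
      using min[OF that(1)] that(2) \<open>d1 > 0\<close> by (simp add: \<delta>_def dist_norm)
  qed (use assms(2) \<open>yb \<in> \<Phi> xb\<close> \<open>\<delta> > 0\<close> in auto)
  define c where "c k = L / \<delta> + real k" for k
  have "\<forall>k. \<exists>z x y. penalty_minimizer (c k) z x y"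
    using penalty_minimizer_exists by blast
  then obtain z x y where "\<And>k. penalty_minimizer (c k) (z k) (x k) (y k)"
    by metis
  then interpret penalized_sequence \<phi> \<Phi> xb yb L \<delta> c z x y
  proof unfold_locales
    show "L \<le> c k * \<delta>" for k
      using \<open>\<delta> > 0\<close> by (simp add: c_def distrib_right)
    show "filterlim c at_top sequentially"
      unfolding c_def by (rule filterlim_tendsto_add_at_top[OF tendsto_const filterlim_real_sequentially])
  qed
  show ?thesis using M_stationary_if_asymptotically_regular assms(5) .
qed

end
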